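(* Let $0\le\ell\le r$. Among all ideals $[I_0,\dots,I_\ell]$ of $\Omega_{H_\ell}$ with $I_0=p\mathbb{Z}$, the only prime ideal is $$\mathcal L^\ell(p)=[(p),J_{1,0}(p),\dots,J_{\ell,0}(p)].$$
   Context: Fix a prime $p$ and an integer $r\ge0$. For $0\le k\le r$ let $R_k$ be the commutative ring which is free as a $\mathbb{Z}$-module with basis $X_{k,0},\dots,X_{k,k}$ and multiplication $X_{k,i}X_{k,j}=p^{k-\max(i,j)}X_{k,\min(i,j)}$; thus $X_{k,k}=1$, and an integer $n$ is identified with $nX_{k,k}$. For $0\le k\le\ell\le r$ define: the additive map $\mathrm{ind}^\ell_k:R_k\to R_\ell$, $X_{k,i}\mapsto X_{\ell,i}$; the ring homomorphism $\mathrm{res}^\ell_k:R_\ell\to R_k$, $\mathrm{res}^\ell_k(X_{\ell,i})=p^{\ell-k}X_{k,i}$ if $i\le k$ and $=p^{\ell-i}$ if $i\ge k$; and the multiplicative map $\mathrm{jnd}^\ell_k:R_k\to R_\ell$, $$\mathrm{jnd}^\ell_k\Big(\sum_{i=0}^k m_iX_{k,i}\Big)=m_kX_{\ell,\ell}+\sum_{k\le i<\ell}\frac{m_k^{p^{\ell-i}}-m_k^{p^{\ell-i-1}}}{p^{\ell-i}}X_{\ell,i}+\sum_{0\le i<k}\frac{(\sum_{s=i}^k m_sp^{k-s})^{p^{\ell-k}}-(\sum_{s=i+1}^k m_sp^{k-s})^{p^{\ell-k}}}{p^{\ell-i}}X_{\ell,i}$$ ($m_i\in\mathbb{Z}$).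 For $k=\ell$ these maps are the identity. These data form the Burnside Tambara functor on $\mathbb{Z}/p^r\mathbb{Z}$; keeping indices $\le n$ gives $\Omega_{H_n}$. An ideal of $\Omega_{H_n}$ is a sequence $[I_0,\dots,I_n]$ of ideals $I_k\subseteq R_k$ such that for every $1\le k\le n$: $\mathrm{ind}^k_{k-1}(I_{k-1})\subseteq I_k$, $\mathrm{res}^k_{k-1}(I_k)\subseteq I_{k-1}$, $\mathrm{jnd}^k_{k-1}(I_{k-1})\subseteq I_k$. It is proper if $I_0\ne R_0$. A proper ideal is prime if for all $0\le\ell'\le k\le n$, $a\in R_k$, $b\in R_{\ell'}$: whenever $(\mathrm{jnd}^m_i\mathrm{res}^k_i(a))\cdot(\mathrm{jnd}^m_j\mathrm{res}^{\ell'}_j(b))\in I_m$ for all $0\le i\le k$, $0\le j\le\ell'$, $m=\max(i,j)$, then $a\in I_k$ or $b\in I_{\ell'}$. For an ideal $I\subseteq R_{k-1}$, $L(I)=(\mathrm{res}^k_{k-1})^{-1}(I)\subseteq R_k$; for $\mathscr I=[I_0,\dots,I_{k-1}]$, $\mathcal L\mathscr I=[I_0,\dots,I_{k-1},L(I_{k-1})]$, $\mathcal L^n$ its iterate, $(p)=[p\mathbb{Z}]$. For $0\le j\le i$, $F_{i,j}=X_{i,j}-p^{i-j}$; for $i\ge1$, $J_{i,0}(x)\subseteq R_i$ is the ideal generated by $x,F_{i,0},\dots,F_{i,i-1}$. *)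

theory Defs
  imports "HOL-Computational_Algebra.Primes"
begin

text \<open>Elements of R_k are coefficient vectors m :: nat => int with m i the
coefficient of X_{k,i}; they must vanish above k.\<close>

definition carr :: "nat \<Rightarrow> (nat \<Rightarrow> int) set" where
  "carr k = {m. \<forall>i>k. m i = 0}"

text \<open>The integer n viewed in R_k, i.e. n X_{k,k}.\<close>
definition cst :: "nat \<Rightarrow> int \<Rightarrow> (nat \<Rightarrow> int)" where
  "cst k n = (\<lambda>i. if i = k then n else 0)"

definition bX :: "nat \<Rightarrow> (nat \<Rightarrow> int)" where
  "bX i = (\<lambda>t. if t = i then 1 else 0)"

text \<open>Multiplication in R_k: X_{k,i} X_{k,j} = p^(k - max i j) X_{k, min i j}.\<close>
definition mult :: "nat \<Rightarrow> nat \<Rightarrow> (nat \<Rightarrow> int) \<Rightarrow> (nat \<Rightarrow> int) \<Rightarrow> (nat \<Rightarrow> int)" where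
  "mult p k a b = (\<lambda>t. if t \<le> k then
      (\<Sum>i\<le>k. \<Sum>j\<le>k. if min i j = t then a i * b j * int p ^ (k - max i j) else 0)
    else 0)"

definition ind :: "nat \<Rightarrow> nat \<Rightarrow> (nat \<Rightarrow> int) \<Rightarrow> (nat \<Rightarrow> int)" where
  "ind l k a = a"  \<comment> \<open>ind^l_k : X_{k,i} |-> X_{l,i}\<close>

definition res :: "nat \<Rightarrow> nat \<Rightarrow> nat \<Rightarrow> (nat \<Rightarrow> int) \<Rightarrow> (nat \<Rightarrow> int)" where
  "res p l k a = (\<lambda>j. if j < k then int p ^ (l - k) * a j
      else if j = k then int p ^ (l - k) * a k + (\<Sum>i\<in>{k<..l}. int p ^ (l - i) * a i)
      else 0)"

definition jnd :: "nat \<Rightarrow> nat \<Rightarrow> nat \<Rightarrow> (nat \<Rightarrow> int) \<Rightarrow> (nat \<Rightarrow> int)" where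
  "jnd p l k m = (\<lambda>i.
      if i = l then m k
      else if k \<le> i \<and> i < l then
        (m k ^ (p ^ (l - i)) - m k ^ (p ^ (l - i - 1))) div (int p ^ (l - i))
      else if i < k then
        ((\<Sum>s\<in>{i..k}. m s * int p ^ (k - s)) ^ (p ^ (l - k))
          - (\<Sum>s\<in>{i+1..k}. m s * int p ^ (k - s)) ^ (p ^ (l - k))) div (int p ^ (l - i))
      else 0)"

definition ring_ideal :: "nat \<Rightarrow> nat \<Rightarrow> (nat \<Rightarrow> int) set \<Rightarrow> bool" where
  "ring_ideal p k J \<longleftrightarrow> J \<subseteq> carr k \<and> (\<lambda>_. 0) \<in> J \<and> (\<forall>x\<in>J. \<forall>y\<in>J. (\<lambda>t. x t + y t) \<in> J)
     \<and> (\<forall>a\<in>carr k. \<forall>x\<in>J. mult p k a x \<in> J)"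

definition gen_ideal :: "nat \<Rightarrow> nat \<Rightarrow> (nat \<Rightarrow> int) set \<Rightarrow> (nat \<Rightarrow> int) set" where
  "gen_ideal p k S = \<Inter>{J. ring_ideal p k J \<and> S \<subseteq> J}"

definition omega_ideal :: "nat \<Rightarrow> nat \<Rightarrow> (nat \<Rightarrow> (nat \<Rightarrow> int) set) \<Rightarrow> bool" where
  "omega_ideal p n I \<longleftrightarrow> (\<forall>k\<le>n. ring_ideal p k (I k)) \<and>
     (\<forall>k. 1 \<le> k \<and> k \<le> n \<longrightarrow>
        ind k (k-1) ` I (k-1) \<subseteq> I k \<and> res p k (k-1) ` I k \<subseteq> I (k-1)
        \<and> jnd p k (k-1) ` I (k-1) \<subseteq> I k)"

definition omega_prime :: "nat \<Rightarrow> nat \<Rightarrow> (nat \<Rightarrow> (nat \<Rightarrow> int) set) \<Rightarrow> bool" where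
  "omega_prime p n I \<longleftrightarrow> I 0 \<noteq> carr 0 \<and>
     (\<forall>k l' a b. l' \<le> k \<and> k \<le> n \<and> a \<in> carr k \<and> b \<in> carr l' \<and>
        (\<forall>i\<le>k. \<forall>j\<le>l'. mult p (max i j) (jnd p (max i j) i (res p k i a))
                                         (jnd p (max i j) j (res p l' j b)) \<in> I (max i j))
        \<longrightarrow> a \<in> I k \<or> b \<in> I l')"

definition pZ :: "nat \<Rightarrow> (nat \<Rightarrow> int) set" where
  "pZ p = {m \<in> carr 0. int p dvd m 0}"

definition Lop :: "nat \<Rightarrow> nat \<Rightarrow> (nat \<Rightarrow> int) set \<Rightarrow> (nat \<Rightarrow> int) set" where
  "Lop p k J = {a \<in> carr k. res p k (k-1) a \<in> J}"

text \<open>Lseq p k is the k-th component of L^n (p) (for any n >= k).\<close>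
fun Lseq :: "nat \<Rightarrow> nat \<Rightarrow> (nat \<Rightarrow> int) set" where
  "Lseq p 0 = pZ p"
| "Lseq p (Suc k) = Lop p (Suc k) (Lseq p k)"

definition Fij :: "nat \<Rightarrow> nat \<Rightarrow> nat \<Rightarrow> (nat \<Rightarrow> int)" where
  "Fij p i j = (\<lambda>t. bX j t - cst i (int p ^ (i - j)) t)"

definition J0 :: "nat \<Rightarrow> nat \<Rightarrow> int \<Rightarrow> (nat \<Rightarrow> int) set" where
  "J0 p i x = gen_ideal p i ({cst i x} \<union> {Fij p i j | j. j < i})"

end

theory Submission
  imports Defs
begin

text \<open>Membership in L^k(p) depends only on the top coefficient a_k (that of X_{k,k} = 1):
  restriction to R_{k-1} turns it into p a_{k-1} + a_k, so L^k(p) = {a. p dvd a_k}.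
  Since res^k_0(a) is congruent to a_k mod p and a \<mapsto> a_k is multiplicative, this is prime,
  and a = \<Sum>_{j<k} a_j F_{k,j} + res^k_0(a) exhibits the generators of J_{k,0}(p).  Restriction forces I_k \<subseteq> L^k(p).  Conversely I_{k-1}
  and jnd(p) yield every x with x_k = p c and p dvd x_{k-1} + c; primality tested on a = b = p
  then puts p into I_k, and these two pieces generate L^k(p).\<close>

lemma sum_sum_delta:
  fixes c :: "'a::comm_monoid_add"
  assumes "finite A" "finite B" "i0 \<in> A" "j0 \<in> B"
  shows "(\<Sum>i\<in>A. \<Sum>j\<in>B. if i = i0 \<and> j = j0 then c else 0) = c"
proof -
  have "(\<Sum>j\<in>B. if i = i0 \<and> j = j0 then c else 0) = (if i = i0 then c else 0)" for i
    using assms by (cases "i = i0") simp_all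
  then show ?thesis
    using assms by simp
qed

lemma mult_carr: "mult p k a b \<in> carr k"
  unfolding mult_def carr_def by simp

lemma mult_top_coeff: "mult p k a b k = a k * b k"
proof -
  have "(\<Sum>i\<le>k. \<Sum>j\<le>k. if min i j = k then a i * b j * int p ^ (k - max i j) else 0)
      = (\<Sum>i\<le>k. \<Sum>j\<le>k. if i = k \<and> j = k then a k * b k else 0)"
    by (intro sum.cong refl) (auto simp: min_def max_def)
  then show ?thesis
    unfolding mult_def by (simp add: sum_sum_delta)
qed

lemma mult_commute: "mult p k a b = mult p k b a"
proof -
  have "(\<Sum>i\<le>k. \<Sum>j\<le>k. if min i j = t then a i * b j * int p ^ (k - max i j) else 0)
      = (\<Sum>j\<le>k. \<Sum>i\<le>k. if min j i = t then b j * a i * int p ^ (k - max j i) else 0)" for t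
    by (subst sum.swap) (intro sum.cong refl, simp add: ac_simps)
  then show ?thesis
    unfolding mult_def by presburger
qed

lemma cst_carr: "cst k c \<in> carr k"
  unfolding cst_def carr_def by simp

lemma mult_cst_left:
  assumes "x \<in> carr k"
  shows "mult p k (cst k c) x = (\<lambda>t. c * x t)"
proof
  fix t
  have "(\<Sum>i\<le>k. \<Sum>j\<le>k. if min i j = t then cst k c i * x j * int p ^ (k - max i j) else 0)
      = (\<Sum>i\<le>k. \<Sum>j\<le>k. if i = k \<and> j = t then c * x t else 0)" if "t \<le> k"
    using that by (intro sum.cong refl) (auto simp: cst_def min_def max_def)
  then show "mult p k (cst k c) x t = c * x t"
    using assms by (auto simp: mult_def carr_def sum_sum_delta)
qed

lemma jnd_carr: "k \<le> l \<Longrightarrow> jnd p l k m \<in> carr l"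
  unfolding jnd_def carr_def by auto

lemma jnd_top_coeff: "jnd p l k m l = m k"
  unfolding jnd_def by simp

lemma jnd_self:
  assumes "p > 0" "a \<in> carr m"
  shows "jnd p m m a = a"
proof
  fix i
  show "jnd p m m a i = a i"
  proof (cases "i < m")
    case True
    have "(\<Sum>s\<in>{i..m}. a s * int p ^ (m - s)) = a i * int p ^ (m - i) + (\<Sum>s\<in>{i+1..m}. a s * int p ^ (m - s))"
      using True by (simp add: sum.atLeast_Suc_atMost)
    then show ?thesis
      using True assms(1) by (simp add: jnd_def)
  qed (use assms(2) in \<open>auto simp: jnd_def carr_def\<close>)
qed

lemma res_carr: "res p l k a \<in> carr k"
  unfolding res_def carr_def by auto

lemma res_cst:
  assumes "i \<le> k"
  shows "res p k i (cst k c) = cst i c"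
proof
  fix j
  have "(\<Sum>s\<in>{i<..k}. int p ^ (k - s) * cst k c s) = (\<Sum>s\<in>{i<..k}. if s = k then c else 0)"
    by (intro sum.cong) (auto simp: cst_def)
  also have "\<dots> = (if i < k then c else 0)"
    using assms by simp
  finally show "res p k i (cst k c) j = cst i c j"
    using assms by (auto simp: res_def cst_def)
qed

lemma res_Suc_top_coeff: "res p (Suc n) n a n = int p * a n + a (Suc n)"
proof -
  have "{n<..Suc n} = {Suc n}" by auto
  then show ?thesis by (simp add: res_def)
qed

lemma res_zero_coeff: "res p k 0 a 0 = (\<Sum>i\<le>k. int p ^ (k - i) * a i)"
proof -
  have "{..k} = insert 0 {0<..k}" by auto
  then show ?thesis by (simp add: res_def)
qed

lemma res_zero_coeff_dvd_iff: "int p dvd res p k 0 a 0 \<longleftrightarrow> int p dvd a k"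
proof -
  have "{..k} = insert k {..<k}" by auto
  then have "res p k 0 a 0 = (\<Sum>i<k. int p ^ (k - i) * a i) + a k"
    by (simp add: res_zero_coeff add.commute)
  moreover have "int p dvd (\<Sum>i<k. int p ^ (k - i) * a i)"
    by (intro dvd_sum dvd_mult2) simp
  ultimately show ?thesis
    by (simp add: dvd_add_right_iff)
qed

lemma ring_ideal_carr: "ring_ideal p k J \<Longrightarrow> J \<subseteq> carr k"
  unfolding ring_ideal_def by blast

lemma ring_ideal_add: "ring_ideal p k J \<Longrightarrow> x \<in> J \<Longrightarrow> y \<in> J \<Longrightarrow> (\<lambda>t. x t + y t) \<in> J"
  unfolding ring_ideal_def by blast

lemma ring_ideal_scale:
  assumes "ring_ideal p k J" "y \<in> J"
  shows "(\<lambda>t. c * y t) \<in> J"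
proof -
  have "mult p k (cst k c) y \<in> J"
    using assms cst_carr unfolding ring_ideal_def by blast
  moreover have "y \<in> carr k"
    using assms ring_ideal_carr by blast
  ultimately show ?thesis
    by (simp add: mult_cst_left)
qed

lemma ring_ideal_lincomb:
  assumes "ring_ideal p k J" "finite A" "\<And>j. j \<in> A \<Longrightarrow> f j \<in> J"
  shows "(\<lambda>t. \<Sum>j\<in>A. c j * f j t) \<in> J"
  using assms(2,3)
proof (induction A rule: finite_induct)
  case empty
  then show ?case
    using assms(1) by (simp add: ring_ideal_def)
next
  case (insert j A)
  then show ?case
    using ring_ideal_add[OF assms(1) ring_ideal_scale[OF assms(1)]] by simp
qed

definition top_dvd_ideal :: "nat \<Rightarrow> nat \<Rightarrow> (nat \<Rightarrow> int) set" where
  "top_dvd_ideal p k = {a \<in> carr k. int p dvd a k}"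

lemma ring_ideal_top_dvd: "ring_ideal p k (top_dvd_ideal p k)"
  using mult_carr unfolding ring_ideal_def top_dvd_ideal_def
  by (auto simp: mult_top_coeff carr_def)

lemma Lseq_eq_top_dvd_ideal: "Lseq p k = top_dvd_ideal p k"
proof (induction k)
  case 0
  then show ?case by (simp add: top_dvd_ideal_def pZ_def)
next
  case (Suc k)
  then show ?case
    by (auto simp: Lop_def top_dvd_ideal_def res_carr res_Suc_top_coeff dvd_add_right_iff)
qed

lemma carr_mono: "k \<le> l \<Longrightarrow> carr k \<subseteq> carr l"
  unfolding carr_def by auto

lemma omega_ideal_Lseq: "omega_ideal p l (Lseq p)"
  unfolding omega_ideal_def Lseq_eq_top_dvd_ideal
proof (intro conjI allI impI ring_ideal_top_dvd)
  fix k assume "1 \<le> k \<and> k \<le> l"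
  then obtain n where k: "k = Suc n"
    by (cases k) auto
  show "ind k (k - 1) ` top_dvd_ideal p (k - 1) \<subseteq> top_dvd_ideal p k"
    using carr_mono[of n k] by (auto simp: k ind_def top_dvd_ideal_def carr_def)
  show "res p k (k - 1) ` top_dvd_ideal p k \<subseteq> top_dvd_ideal p (k - 1)"
    by (auto simp: k top_dvd_ideal_def res_carr res_Suc_top_coeff)
  show "jnd p k (k - 1) ` top_dvd_ideal p (k - 1) \<subseteq> top_dvd_ideal p k"
    by (auto simp: k top_dvd_ideal_def jnd_carr jnd_top_coeff)
qed

lemma omega_prime_Lseq:
  assumes "prime p"
  shows "omega_prime p l (Lseq p)"
  unfolding omega_prime_def Lseq_eq_top_dvd_ideal
proof (intro conjI allI impI)
  show "top_dvd_ideal p 0 \<noteq> carr 0"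
  proof
    assume "top_dvd_ideal p 0 = carr 0"
    then have "int p dvd cst 0 1 0"
      using cst_carr[of 0 1] by (auto simp: top_dvd_ideal_def)
    then show False
      using assms by (simp add: cst_def)
  qed
next
  fix k l' a b
  assume h: "l' \<le> k \<and> k \<le> l \<and> a \<in> carr k \<and> b \<in> carr l' \<and>
    (\<forall>i\<le>k. \<forall>j\<le>l'. mult p (max i j) (jnd p (max i j) i (res p k i a))
       (jnd p (max i j) j (res p l' j b)) \<in> top_dvd_ideal p (max i j))"
  then have "int p dvd res p k 0 a 0 * res p l' 0 b 0"
    by (fastforce simp: top_dvd_ideal_def mult_top_coeff jnd_top_coeff)
  then have "int p dvd res p k 0 a 0 \<or> int p dvd res p l' 0 b 0"
    using assms by (simp add: prime_dvd_mult_iff)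
  then show "a \<in> top_dvd_ideal p k \<or> b \<in> top_dvd_ideal p l'"
    using h by (auto simp: top_dvd_ideal_def res_zero_coeff_dvd_iff)
qed

lemma Fij_carr: "j < k \<Longrightarrow> Fij p k j \<in> carr k"
  unfolding Fij_def carr_def bX_def cst_def by auto

lemma carr_eq_Fij_expansion:
  assumes "a \<in> carr k"
  shows "a = (\<lambda>t. (\<Sum>j<k. a j * Fij p k j t) + cst k (res p k 0 a 0) t)"
proof
  fix t
  consider "t < k" | "t = k" | "t > k" by linarith
  then show "a t = (\<Sum>j<k. a j * Fij p k j t) + cst k (res p k 0 a 0) t"
  proof cases
    case 1
    then have "(\<Sum>j<k. a j * Fij p k j t) = (\<Sum>j<k. if j = t then a t else 0)"
      by (intro sum.cong) (auto simp: Fij_def bX_def cst_def)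
    then show ?thesis using 1 by (simp add: cst_def)
  next
    case 2
    have "(\<Sum>j<k. a j * Fij p k j k) = (\<Sum>j<k. - (int p ^ (k - j) * a j))"
      by (intro sum.cong) (auto simp: Fij_def bX_def cst_def)
    moreover have "res p k 0 a 0 = (\<Sum>j<k. int p ^ (k - j) * a j) + a k"
      by (simp add: res_zero_coeff lessThan_Suc_atMost[symmetric] less_Suc_eq_le)
    ultimately show ?thesis
      using 2 by (simp add: cst_def sum_negf)
  next
    case 3
    then show ?thesis
      using assms by (simp add: Fij_def bX_def cst_def carr_def)
  qed
qed

lemma Lseq_eq_J0:
  assumes "1 \<le> k"
  shows "Lseq p k = J0 p k (int p)"
proof -
  let ?G = "{cst k (int p)} \<union> {Fij p k j | j. j < k}"
  have "Fij p k j \<in> top_dvd_ideal p k" if "j < k" for j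
    using that Fij_carr[OF that] by (simp add: top_dvd_ideal_def Fij_def bX_def cst_def)
  then have "?G \<subseteq> top_dvd_ideal p k"
    using cst_carr by (auto simp: top_dvd_ideal_def cst_def)
  then have "J0 p k (int p) \<subseteq> top_dvd_ideal p k"
    unfolding J0_def gen_ideal_def using ring_ideal_top_dvd by blast
  moreover have "a \<in> J" if a: "a \<in> top_dvd_ideal p k" and J: "ring_ideal p k J" "?G \<subseteq> J" for a J
  proof -
    have "int p dvd res p k 0 a 0"
      using a by (simp add: top_dvd_ideal_def res_zero_coeff_dvd_iff)
    then obtain d where d: "res p k 0 a 0 = int p * d" ..
    have "(\<lambda>t. \<Sum>j<k. a j * Fij p k j t) \<in> J"
      using J by (intro ring_ideal_lincomb) auto
    moreover have "cst k (res p k 0 a 0) = (\<lambda>t. d * cst k (int p) t)"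
      by (simp add: d cst_def fun_eq_iff)
    then have "cst k (res p k 0 a 0) \<in> J"
      using J by (simp add: ring_ideal_scale)
    ultimately have "(\<lambda>t. (\<Sum>j<k. a j * Fij p k j t) + cst k (res p k 0 a 0) t) \<in> J"
      by (rule ring_ideal_add[OF J(1)])
    moreover have "a \<in> carr k"
      using a by (simp add: top_dvd_ideal_def)
    ultimately show "a \<in> J"
      by (subst carr_eq_Fij_expansion) auto
  qed
  then have "top_dvd_ideal p k \<subseteq> J0 p k (int p)"
    unfolding J0_def gen_ideal_def by blast
  ultimately show ?thesis
    by (simp add: Lseq_eq_top_dvd_ideal)
qed

lemma jnd_cst_coeff_below_top:
  assumes "p > 0"
  shows "jnd p (Suc n) n (cst n (int p)) n = int p ^ (p - 1) - 1"
proof -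
  have "int p ^ p = int p * int p ^ (p - 1)"
    using assms by (simp flip: power_Suc)
  then show ?thesis
    using assms by (simp add: jnd_def cst_def right_diff_distrib)
qed

lemma jnd_cst_mult:
  assumes "p > 0"
  shows "mult p (max i j) (jnd p (max i j) i (cst i c)) (jnd p (max i j) j (cst j c))
    = (\<lambda>t. c * jnd p (max i j) (min i j) (cst (min i j) c) t)"
proof (cases "i \<le> j")
  case True
  then show ?thesis
    using assms by (simp add: max_def min_def jnd_self cst_carr jnd_carr mult_cst_left
        mult_commute[of p j _ "cst j c"])
next
  case False
  then show ?thesis
    using assms by (simp add: max_def min_def jnd_self cst_carr jnd_carr mult_cst_left)
qed

text \<open>g = jnd(p) has top coefficient p and coefficient p^(p-1) - 1, i.e. -1 mod p, at X_n;
  so x - c g lies in R_n with coefficient congruent to x_n + c there.\<close>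

lemma ring_ideal_Suc_mem:
  assumes "2 \<le> p" "ring_ideal p (Suc n) J" "top_dvd_ideal p n \<subseteq> J"
    and "jnd p (Suc n) n (cst n (int p)) \<in> J"
    and "x \<in> carr (Suc n)" "x (Suc n) = int p * c" "int p dvd x n + c"
  shows "x \<in> J"
proof -
  define g where "g = jnd p (Suc n) n (cst n (int p))"
  have "int p dvd int p ^ (p - 1)"
    using assms(1) by simp
  then obtain e where "int p ^ (p - 1) = int p * e" ..
  then have e: "g n = int p * e - 1"
    using assms(1) by (simp add: g_def jnd_cst_coeff_below_top)
  define u where "u = (\<lambda>t. x t - c * g t)"
  have "g (Suc n) = int p" "g \<in> carr (Suc n)"
    by (simp_all add: g_def jnd_top_coeff cst_def jnd_carr)
  have "u i = 0" if "i > n" for i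
  proof (cases "i = Suc n")
    case False
    then show ?thesis
      using that assms(5) \<open>g \<in> carr (Suc n)\<close> by (simp add: u_def carr_def)
  qed (simp add: u_def assms(6) \<open>g (Suc n) = int p\<close>)
  then have "u \<in> carr n"
    by (simp add: carr_def)
  moreover have "u n = (x n + c) - int p * (c * e)"
    by (simp add: u_def e algebra_simps)
  ultimately have "u \<in> J"
    using assms(3,7) by (auto simp: top_dvd_ideal_def)
  moreover have "(\<lambda>t. c * g t) \<in> J"
    using assms(2,4) by (simp add: g_def ring_ideal_scale)
  ultimately have "(\<lambda>t. u t + c * g t) \<in> J"
    by (rule ring_ideal_add[OF assms(2)])
  then show ?thesis
    by (simp add: u_def)
qed

lemma top_dvd_ideal_Suc_subset:
  assumes "ring_ideal p (Suc n) J" "cst (Suc n) (int p) \<in> J"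
    and mem: "\<And>x c. x \<in> carr (Suc n) \<Longrightarrow> x (Suc n) = int p * c \<Longrightarrow> int p dvd x n + c \<Longrightarrow> x \<in> J"
  shows "top_dvd_ideal p (Suc n) \<subseteq> J"
proof
  fix a
  assume a: "a \<in> top_dvd_ideal p (Suc n)"
  then obtain c where c: "a (Suc n) = int p * c"
    by (auto simp: top_dvd_ideal_def)
  define d where "d = a n + c"
  define x where "x = (\<lambda>t. a t - d * cst (Suc n) (int p) t)"
  have "x \<in> carr (Suc n)"
    using a by (simp add: x_def top_dvd_ideal_def carr_def cst_def)
  moreover have "x (Suc n) = int p * (c - d)"
    by (simp add: x_def c cst_def algebra_simps)
  moreover have "x n + (c - d) = 0"
    by (simp add: x_def d_def cst_def)
  ultimately have "x \<in> J"
    by (intro mem[of x "c - d"]) simp_all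
  moreover have "(\<lambda>t. d * cst (Suc n) (int p) t) \<in> J"
    using assms(1,2) by (rule ring_ideal_scale)
  ultimately have "(\<lambda>t. x t + d * cst (Suc n) (int p) t) \<in> J"
    by (rule ring_ideal_add[OF assms(1)])
  then show "a \<in> J"
    by (simp add: x_def)
qed

lemma subset_top_dvd_ideal_Suc:
  assumes "ring_ideal p (Suc n) J" "res p (Suc n) n ` J \<subseteq> top_dvd_ideal p n"
  shows "J \<subseteq> top_dvd_ideal p (Suc n)"
proof
  fix a
  assume a: "a \<in> J"
  then have "int p dvd int p * a n + a (Suc n)"
    using assms(2) by (auto simp: top_dvd_ideal_def res_Suc_top_coeff)
  moreover have "a \<in> carr (Suc n)"
    using a assms(1) ring_ideal_carr by blast
  ultimately show "a \<in> top_dvd_ideal p (Suc n)"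
    by (simp add: top_dvd_ideal_def dvd_add_right_iff)
qed

lemma omega_idealD:
  assumes "omega_ideal p l I" "Suc n \<le> l"
  shows "ring_ideal p (Suc n) (I (Suc n))" and "I n \<subseteq> I (Suc n)"
    and "res p (Suc n) n ` I (Suc n) \<subseteq> I n" and "jnd p (Suc n) n ` I n \<subseteq> I (Suc n)"
  using assms unfolding omega_ideal_def ind_def
  by (auto dest!: spec[of _ "Suc n"])

lemma omega_primeD:
  assumes "omega_prime p l I" "l' \<le> k" "k \<le> l" "a \<in> carr k" "b \<in> carr l'"
    and "\<And>i j. i \<le> k \<Longrightarrow> j \<le> l' \<Longrightarrow> mult p (max i j) (jnd p (max i j) i (res p k i a))
           (jnd p (max i j) j (res p l' j b)) \<in> I (max i j)"
  shows "a \<in> I k \<or> b \<in> I l'"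
  using assms unfolding omega_prime_def by blast

text \<open>Every test product for a = b = p is p jnd(p), which lies in a lower level, where I is
  already known, or satisfies the membership criterion of ring_ideal_Suc_mem.\<close>

lemma omega_prime_cst_mem:
  assumes "p > 0" "omega_prime p l I" "Suc n \<le> l"
    and below: "\<And>m. m \<le> n \<Longrightarrow> I m = top_dvd_ideal p m"
    and mem: "\<And>x c. x \<in> carr (Suc n) \<Longrightarrow> x (Suc n) = int p * c \<Longrightarrow> int p dvd x n + c \<Longrightarrow> x \<in> I (Suc n)"
  shows "cst (Suc n) (int p) \<in> I (Suc n)"
proof -
  have products: "(\<lambda>t. int p * jnd p (max i j) (min i j) (cst (min i j) (int p)) t) \<in> I (max i j)"
    if "i \<le> Suc n" "j \<le> Suc n" for i j
  proof -
    define y where "y = jnd p (max i j) (min i j) (cst (min i j) (int p))"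
    have y: "y \<in> carr (max i j)" "y (max i j) = int p"
      by (simp_all add: y_def jnd_carr jnd_top_coeff cst_def)
    show ?thesis
    proof (cases "max i j \<le> n")
      case True
      then show ?thesis
        using y by (simp add: below y_def top_dvd_ideal_def carr_def)
    next
      case False
      then have m: "max i j = Suc n"
        using that by (auto simp: max_def)
      have "(\<lambda>t. int p * y t) \<in> I (Suc n)"
        using y by (intro mem[of _ "int p"]) (simp_all add: m carr_def)
      then show ?thesis
        by (simp add: m y_def)
    qed
  qed
  have "cst (Suc n) (int p) \<in> I (Suc n) \<or> cst (Suc n) (int p) \<in> I (Suc n)"
    by (rule omega_primeD[OF assms(2) order_refl assms(3) cst_carr cst_carr])
      (simp add: res_cst jnd_cst_mult assms(1) products)
  then show ?thesis
    by simp
qed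

lemma omega_prime_ideal_unique:
  assumes "prime p" "omega_ideal p l I" "I 0 = pZ p" "omega_prime p l I" "k \<le> l"
  shows "I k = Lseq p k"
  using assms(5)
proof (induction k rule: less_induct)
  case (less k)
  show ?case
  proof (cases k)
    case 0
    then show ?thesis
      using assms(3) by simp
  next
    case (Suc n)
    have p: "2 \<le> p" "p > 0"
      using prime_ge_2_nat[OF assms(1)] by simp_all
    have below: "I m = top_dvd_ideal p m" if "m \<le> n" for m
      using less that Suc by (simp add: Lseq_eq_top_dvd_ideal)
    note I = omega_idealD[OF assms(2) less.prems[unfolded Suc]]
    have "top_dvd_ideal p n \<subseteq> I (Suc n)"
      using I(2) below[of n] by simp
    moreover have "cst n (int p) \<in> I n"
      using below[of n] cst_carr by (simp add: top_dvd_ideal_def cst_def)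
    then have "jnd p (Suc n) n (cst n (int p)) \<in> I (Suc n)"
      using I(4) by blast
    ultimately have mem: "x \<in> I (Suc n)"
      if "x \<in> carr (Suc n)" "x (Suc n) = int p * c" "int p dvd x n + c" for x c
      using ring_ideal_Suc_mem[OF p(1) I(1) _ _ that] by blast
    have "I (Suc n) \<subseteq> top_dvd_ideal p (Suc n)"
      using I(1,3) below[of n] by (intro subset_top_dvd_ideal_Suc) simp_all
    moreover have "top_dvd_ideal p (Suc n) \<subseteq> I (Suc n)"
      using omega_prime_cst_mem[OF p(2) assms(4) less.prems[unfolded Suc] below mem]
      by (intro top_dvd_ideal_Suc_subset[OF I(1) _ mem])
    ultimately show ?thesis
      by (simp add: Suc Lseq_eq_top_dvd_ideal)
  qed
qed

theorem proposition6:
  fixes p r l :: nat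
  assumes "prime p" and "l \<le> r"
  shows "omega_ideal p l (Lseq p) \<and> omega_prime p l (Lseq p)
    \<and> (\<forall>k. 1 \<le> k \<and> k \<le> l \<longrightarrow> Lseq p k = J0 p k (int p))
    \<and> (\<forall>I. omega_ideal p l I \<and> I 0 = pZ p \<and> omega_prime p l I
           \<longrightarrow> (\<forall>k\<le>l. I k = Lseq p k))"
  using omega_ideal_Lseq omega_prime_Lseq[OF assms(1)] Lseq_eq_J0
    omega_prime_ideal_unique[OF assms(1)] by blast

end
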